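(* Under the hypotheses of the following setting, let $a>0$ be such that for every $\mathfrak{z}\in\mathbb{C}\setminus[a,\infty)$ and every $\epsilon\in I$ the function $h^\epsilon-\mathfrak{z}1$ has a $\sharp^{B^\epsilon}$-inverse $r^\epsilon_{\mathfrak z}\in\mathfrak{F}[\mathfrak{L}]$ and $(\epsilon,X)\mapsto r^\epsilon_{\mathfrak z}(X)$ belongs to $\mathfrak{F}[\widetilde{\mathfrak{L}}]$ (such $a$ exists). Setting: $I$ compact interval, $m>0$, $\{h^\epsilon\}$ real-valued with $h^\epsilon\in S^m_{1,\mathsf{ell}}(\Xi)$, $\epsilon\mapsto h^\epsilon\in S^m_1(\Xi)$ Fréchet-continuous, $h^\epsilon\ge -C$ uniformly; $\{B^\epsilon\}$ magnetic fields with components in $BC^\infty(\mathcal{X})$ depending continuously on $\epsilon$ in the Fréchet topology. Then for each such $\mathfrak{z}$ the map $I\ni\epsilon\mapsto r^\epsilon_{\mathfrak z}\in\mathfrak{F}[\mathfrak{L}]$ is continuous for the norm $\|G\|_{\mathfrak{F}(\mathfrak{L})}:=\int_{\mathcal X}dy\,\sup_{x\in\mathcal{X}}|(\mathfrak{F}^-G)(x,y)|$.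
   Context: Notation: $\mathcal{X}=\mathbb{R}^n$, $\Xi=\mathcal{X}\times\mathcal{X}^*$, points $X=(x,\xi)$; $\sigma(Y,Z)=z\cdot\eta-y\cdot\zeta$. $S^m_1(\Xi)$: smooth $f$ with $|\partial_x^a\partial_\xi^\alpha f|\le C_{a\alpha}\langle\xi\rangle^{m-|\alpha|}$, with the associated Fréchet seminorms; elliptic: $|f|\ge C\langle\xi\rangle^m$ for $|\xi|$ large. Magnetic Moyal product: with $\Gamma^B(x,y,z):=4\sum_{j,k}y_jz_k\int_0^1ds\int_0^{1-s}dt\,B_{jk}(x-y-z+2sy+2tz)$, $(f\sharp^Bg)(X)=\pi^{-2n}\int\int dYdZ\,e^{-2i\sigma(Y,Z)}e^{-i\Gamma^B(x,y,z)}f(X-Y)g(X-Z)$, extended by duality to the magnetic Moyal algebra $\mathfrak{M}^B(\Xi)\supset S^m_1(\Xi)$ with unit $1$. $[\mathfrak{F}^-f](x,y)=\int d\xi\,e^{i\xi\cdot y}f(x,\xi)$, $\mathfrak{F}$ its inverse. $\mathfrak{L}=L^1(\mathcal{X};BC_u(\mathcal{X}))$: functions $\phi(x,y)$ with norm $\int dy\sup_x|\phi(x,y)|$ ($BC_u$: bounded uniformly continuous), $\mathfrak F[\mathfrak L]=\{f:\mathfrak F^-f\in\mathfrak L\}$. $\widetilde{\mathfrak{L}}$: completion of $C_c(\mathcal{X};C(I;BC_u(\mathcal{X})))$ in the norm $\int dy\sup_\epsilon\sup_x|\tilde\phi(\epsilon,x,y)|$; $\mathfrak F[\widetilde{\mathfrak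 L}]$: functions on $I\times\Xi$ whose partial Fourier transform in $\xi$ lies in $\widetilde{\mathfrak L}$. *)

theory Defs
  imports "HOL-Analysis.Analysis"
begin

definition dpart :: "'a::real_normed_vector \<Rightarrow> ('a \<Rightarrow> 'b::real_normed_vector) \<Rightarrow> 'a \<Rightarrow> 'b" where
  "dpart v f X = vector_derivative (\<lambda>t. f (X + t *\<^sub>R v)) (at 0)"

fun iter_d :: "'a::real_normed_vector list \<Rightarrow> ('a \<Rightarrow> 'b::real_normed_vector) \<Rightarrow> 'a \<Rightarrow> 'b" where
  "iter_d [] f = f"
| "iter_d (v # vs) f = dpart v (iter_d vs f)"

definition smooth :: "('a::euclidean_space \<Rightarrow> 'b::real_normed_vector) \<Rightarrow> bool" where
  "smooth f \<longleftrightarrow> (\<forall>vs. set vs \<subseteq> Basis \<longrightarrow> (\<forall>X. iter_d vs f differentiable at X))"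

type_synonym ('n) phase = "(real^'n) \<times> (real^'n)"

definition jbr :: "real^'n::finite \<Rightarrow> real" where
  "jbr \<xi> = sqrt (1 + (norm \<xi>)\<^sup>2)"

text \<open>number of derivatives in the momentum (xi) variables\<close>
definition xi_count :: "'n::finite phase list \<Rightarrow> nat" where
  "xi_count vs = length (filter (\<lambda>v. fst v = 0) vs)"

definition S1 :: "real \<Rightarrow> ('n::finite phase \<Rightarrow> complex) \<Rightarrow> bool" where
  "S1 m f \<longleftrightarrow> smooth f \<and>
     (\<forall>vs. set vs \<subseteq> Basis \<longrightarrow>
        (\<exists>C. \<forall>X. cmod (iter_d vs f X) \<le> C * jbr (snd X) powr (m - real (xi_count vs))))"

definition elliptic :: "real \<Rightarrow> ('n::finite phase \<Rightarrow> complex) \<Rightarrow> bool" where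
  "elliptic m f \<longleftrightarrow> (\<exists>C>0. \<exists>R. \<forall>X. norm (snd X) \<ge> R \<longrightarrow> cmod (f X) \<ge> C * jbr (snd X) powr m)"

definition S1_seminorm :: "real \<Rightarrow> 'n::finite phase list \<Rightarrow> ('n phase \<Rightarrow> complex) \<Rightarrow> real" where
  "S1_seminorm m vs f = (SUP X. cmod (iter_d vs f X) / jbr (snd X) powr (m - real (xi_count vs)))"

definition S1_cont :: "real \<Rightarrow> real set \<Rightarrow> (real \<Rightarrow> 'n::finite phase \<Rightarrow> complex) \<Rightarrow> bool" where
  "S1_cont m I h \<longleftrightarrow> (\<forall>vs. set vs \<subseteq> Basis \<longrightarrow> (\<forall>\<epsilon>0\<in>I.
      ((\<lambda>\<epsilon>. S1_seminorm m vs (\<lambda>X. h \<epsilon> X - h \<epsilon>0 X)) \<longlongrightarrow> 0) (at \<epsilon>0 within I)))"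

definition BCinf :: "('a::euclidean_space \<Rightarrow> real) \<Rightarrow> bool" where
  "BCinf f \<longleftrightarrow> smooth f \<and> (\<forall>vs. set vs \<subseteq> Basis \<longrightarrow> bounded (range (iter_d vs f)))"

definition BC_seminorm :: "'a::euclidean_space list \<Rightarrow> ('a \<Rightarrow> real) \<Rightarrow> real" where
  "BC_seminorm vs f = (SUP x. \<bar>iter_d vs f x\<bar>)"

text \<open>A magnetic field: a closed 2-form with components in BC-infinity.\<close>
definition magnetic_field :: "('n::finite \<Rightarrow> 'n \<Rightarrow> real^'n \<Rightarrow> real) \<Rightarrow> bool" where
  "magnetic_field B \<longleftrightarrow> (\<forall>j k. BCinf (B j k)) \<and> (\<forall>j k x. B j k x = - B k j x) \<and>
     (\<forall>j k l x. dpart (axis j 1) (B k l) x + dpart (axis k 1) (B l j) x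
                + dpart (axis l 1) (B j k) x = 0)"

definition BC_cont :: "real set \<Rightarrow> (real \<Rightarrow> 'n::finite \<Rightarrow> 'n \<Rightarrow> real^'n \<Rightarrow> real) \<Rightarrow> bool" where
  "BC_cont I B \<longleftrightarrow> (\<forall>j k vs. set vs \<subseteq> Basis \<longrightarrow> (\<forall>\<epsilon>0\<in>I.
      ((\<lambda>\<epsilon>. BC_seminorm vs (\<lambda>x. B \<epsilon> j k x - B \<epsilon>0 j k x)) \<longlongrightarrow> 0) (at \<epsilon>0 within I)))"

definition sigma :: "'n::finite phase \<Rightarrow> 'n phase \<Rightarrow> real" where
  "sigma Y Z = fst Z \<bullet> snd Y - fst Y \<bullet> snd Z"

definition Gamma :: "('n::finite \<Rightarrow> 'n \<Rightarrow> real^'n \<Rightarrow> real) \<Rightarrow> real^'n \<Rightarrow> real^'n \<Rightarrow> real^'n \<Rightarrow> real" where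
  "Gamma B x y z = 4 * (\<Sum>j\<in>UNIV. \<Sum>k\<in>UNIV. y $ j * z $ k *
      set_lebesgue_integral lborel {0..1} (\<lambda>s. set_lebesgue_integral lborel {0..1-s}
          (\<lambda>t. B j k (x - y - z + (2 * s) *\<^sub>R y + (2 * t) *\<^sub>R z))))"

text \<open>Magnetic Moyal product of two Schwartz functions (absolutely convergent integral).\<close>
definition moyal :: "('n::finite \<Rightarrow> 'n \<Rightarrow> real^'n \<Rightarrow> real) \<Rightarrow> ('n phase \<Rightarrow> complex) \<Rightarrow> ('n phase \<Rightarrow> complex)
     \<Rightarrow> 'n phase \<Rightarrow> complex" where
  "moyal B f g X = complex_of_real (1 / pi ^ (2 * CARD('n))) *
     (\<integral>Y. (\<integral>Z. exp (- (2 * \<i>) * complex_of_real (sigma Y Z))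
                 * exp (- \<i> * complex_of_real (Gamma B (fst X) (fst Y) (fst Z)))
                 * f (X - Y) * g (X - Z) \<partial>lborel) \<partial>lborel)"

definition schwartz :: "('a::euclidean_space \<Rightarrow> complex) \<Rightarrow> bool" where
  "schwartz f \<longleftrightarrow> smooth f \<and> (\<forall>vs. set vs \<subseteq> Basis \<longrightarrow>
      (\<forall>k::nat. \<exists>C. \<forall>X. (1 + norm X) ^ k * cmod (iter_d vs f X) \<le> C))"

text \<open>Functions defining tempered distributions by integration.\<close>
definition temp_fun :: "('n::finite phase \<Rightarrow> complex) \<Rightarrow> bool" where
  "temp_fun F \<longleftrightarrow> F \<in> borel_measurable lborel \<and>
     (\<forall>\<theta>. schwartz \<theta> \<longrightarrow> integrable lborel (\<lambda>X. F X * \<theta> X))"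

text \<open>psi = G #B phi (distribution G, Schwartz phi), defined by duality:
  <G # phi, chi> = <G, phi # chi>.\<close>
definition is_right_prod :: "('n::finite \<Rightarrow> 'n \<Rightarrow> real^'n \<Rightarrow> real) \<Rightarrow> ('n phase \<Rightarrow> complex)
     \<Rightarrow> ('n phase \<Rightarrow> complex) \<Rightarrow> ('n phase \<Rightarrow> complex) \<Rightarrow> bool" where
  "is_right_prod B G \<phi> \<psi> \<longleftrightarrow> schwartz \<psi> \<and> (\<forall>\<theta>. schwartz \<theta> \<longrightarrow>
     (\<integral>X. \<psi> X * \<theta> X \<partial>lborel) = (\<integral>X. G X * moyal B \<phi> \<theta> X \<partial>lborel))"

text \<open>psi = phi #B G, defined by duality: <phi # G, chi> = <G, chi # phi>.\<close>
definition is_left_prod :: "('n::finite \<Rightarrow> 'n \<Rightarrow> real^'n \<Rightarrow> real) \<Rightarrow> ('n phase \<Rightarrow> complex)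
     \<Rightarrow> ('n phase \<Rightarrow> complex) \<Rightarrow> ('n phase \<Rightarrow> complex) \<Rightarrow> bool" where
  "is_left_prod B G \<phi> \<psi> \<longleftrightarrow> schwartz \<psi> \<and> (\<forall>\<theta>. schwartz \<theta> \<longrightarrow>
     (\<integral>X. \<psi> X * \<theta> X \<partial>lborel) = (\<integral>X. G X * moyal B \<theta> \<phi> X \<partial>lborel))"

definition moyal_alg :: "('n::finite \<Rightarrow> 'n \<Rightarrow> real^'n \<Rightarrow> real) \<Rightarrow> ('n phase \<Rightarrow> complex) \<Rightarrow> bool" where
  "moyal_alg B F \<longleftrightarrow> temp_fun F \<and> (\<forall>\<phi>. schwartz \<phi> \<longrightarrow>
     (\<exists>\<psi>. is_right_prod B F \<phi> \<psi>) \<and> (\<exists>\<psi>. is_left_prod B F \<phi> \<psi>))"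

text \<open>G is the #B-inverse of F in M^B: F # G = 1 = G # F, where for F, G in M^B
  the product is defined by duality, <F # G, phi> = <F, G # phi>, and <1, phi> = int phi.\<close>
definition sharp_inverse :: "('n::finite \<Rightarrow> 'n \<Rightarrow> real^'n \<Rightarrow> real) \<Rightarrow> ('n phase \<Rightarrow> complex)
     \<Rightarrow> ('n phase \<Rightarrow> complex) \<Rightarrow> bool" where
  "sharp_inverse B F G \<longleftrightarrow> moyal_alg B F \<and> moyal_alg B G \<and>
     (\<forall>\<phi> \<psi>. schwartz \<phi> \<and> is_right_prod B G \<phi> \<psi> \<longrightarrow>
        (\<integral>X. F X * \<psi> X \<partial>lborel) = (\<integral>X. \<phi> X \<partial>lborel)) \<and>
     (\<forall>\<phi> \<psi>. schwartz \<phi> \<and> is_right_prod B F \<phi> \<psi> \<longrightarrow>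
        (\<integral>X. G X * \<psi> X \<partial>lborel) = (\<integral>X. \<phi> X \<partial>lborel))"

definition BCu :: "('a::metric_space \<Rightarrow> complex) \<Rightarrow> bool" where
  "BCu f \<longleftrightarrow> bounded (range f) \<and> uniformly_continuous_on UNIV f"

text \<open>C_c(X; BC_u(X)), functions phi x y (x in BC_u, continuous compactly supported in y)\<close>
definition Cc_L :: "(real^'n::finite \<Rightarrow> real^'n \<Rightarrow> complex) set" where
  "Cc_L = {\<phi>. (\<forall>y. BCu (\<lambda>x. \<phi> x y)) \<and>
      (\<forall>y0. \<forall>e>0. \<exists>d>0. \<forall>y. dist y y0 < d \<longrightarrow> (\<forall>x. cmod (\<phi> x y - \<phi> x y0) \<le> e)) \<and>
      (\<exists>R. \<forall>x y. norm y > R \<longrightarrow> \<phi> x y = 0)}"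

definition L_enorm :: "(real^'n::finite \<Rightarrow> real^'n \<Rightarrow> complex) \<Rightarrow> ennreal" where
  "L_enorm \<phi> = (\<integral>\<^sup>+ y. (SUP x. ennreal (cmod (\<phi> x y))) \<partial>lborel)"

text \<open>L = L^1(X; BC_u(X)), the completion of C_c(X; BC_u(X)) in the norm int dy sup_x |phi|,
  realised by (good) representatives.\<close>
definition Lset :: "(real^'n::finite \<Rightarrow> real^'n \<Rightarrow> complex) set" where
  "Lset = {\<phi>. (\<forall>y. BCu (\<lambda>x. \<phi> x y)) \<and> (\<forall>x. (\<lambda>y. \<phi> x y) \<in> borel_measurable lborel) \<and>
      (\<exists>s. (\<forall>k. s k \<in> Cc_L) \<and> ((\<lambda>k. L_enorm (\<lambda>x y. s k x y - \<phi> x y)) \<longlonglongrightarrow> 0))}"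

definition L_norm :: "(real^'n::finite \<Rightarrow> real^'n \<Rightarrow> complex) \<Rightarrow> real" where
  "L_norm \<phi> = enn2real (L_enorm \<phi>)"

text \<open>C_c(X; C(I; BC_u(X))), functions phi eps x y\<close>
definition Cc_Lt :: "real set \<Rightarrow> (real \<Rightarrow> real^'n::finite \<Rightarrow> real^'n \<Rightarrow> complex) set" where
  "Cc_Lt I = {\<phi>. (\<forall>\<epsilon>\<in>I. \<forall>y. BCu (\<lambda>x. \<phi> \<epsilon> x y)) \<and>
      (\<forall>y. \<forall>\<epsilon>0\<in>I. \<forall>e>0. \<exists>d>0. \<forall>\<epsilon>\<in>I. \<bar>\<epsilon> - \<epsilon>0\<bar> < d \<longrightarrow> (\<forall>x. cmod (\<phi> \<epsilon> x y - \<phi> \<epsilon>0 x y) \<le> e)) \<and>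
      (\<forall>y0. \<forall>e>0. \<exists>d>0. \<forall>y. dist y y0 < d \<longrightarrow> (\<forall>\<epsilon>\<in>I. \<forall>x. cmod (\<phi> \<epsilon> x y - \<phi> \<epsilon> x y0) \<le> e)) \<and>
      (\<exists>R. \<forall>\<epsilon> x y. norm y > R \<longrightarrow> \<phi> \<epsilon> x y = 0)}"

definition Lt_enorm :: "real set \<Rightarrow> (real \<Rightarrow> real^'n::finite \<Rightarrow> real^'n \<Rightarrow> complex) \<Rightarrow> ennreal" where
  "Lt_enorm I \<phi> = (\<integral>\<^sup>+ y. (SUP \<epsilon>\<in>I. SUP x. ennreal (cmod (\<phi> \<epsilon> x y))) \<partial>lborel)"

text \<open>L-tilde: completion of C_c(X; C(I; BC_u(X))) in the norm int dy sup_eps sup_x |phi|,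
  realised by (good) representatives.\<close>
definition Ltset :: "real set \<Rightarrow> (real \<Rightarrow> real^'n::finite \<Rightarrow> real^'n \<Rightarrow> complex) set" where
  "Ltset I = {\<phi>. (\<forall>\<epsilon>\<in>I. \<forall>y. BCu (\<lambda>x. \<phi> \<epsilon> x y)) \<and>
      (\<forall>y. \<forall>\<epsilon>0\<in>I. \<forall>e>0. \<exists>d>0. \<forall>\<epsilon>\<in>I. \<bar>\<epsilon> - \<epsilon>0\<bar> < d \<longrightarrow> (\<forall>x. cmod (\<phi> \<epsilon> x y - \<phi> \<epsilon>0 x y) \<le> e)) \<and>
      (\<forall>\<epsilon>\<in>I. \<forall>x. (\<lambda>y. \<phi> \<epsilon> x y) \<in> borel_measurable lborel) \<and>
      (\<exists>s. (\<forall>k. s k \<in> Cc_Lt I) \<and> ((\<lambda>k. Lt_enorm I (\<lambda>\<epsilon> x y. s k \<epsilon> x y - \<phi> \<epsilon> x y)) \<longlonglongrightarrow> 0))}"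

text \<open>Partial Fourier transform F (inverse of F^-, where
  (F^- f)(x,y) = int d xi e^{i xi.y} f(x,xi)).\<close>
definition Fou :: "(real^'n::finite \<Rightarrow> real^'n \<Rightarrow> complex) \<Rightarrow> 'n phase \<Rightarrow> complex" where
  "Fou \<phi> X = complex_of_real ((2 * pi) powr (- real CARD('n))) *
     (\<integral>y. exp (- \<i> * complex_of_real (snd X \<bullet> y)) * \<phi> (fst X) y \<partial>lborel)"

definition FLset :: "('n::finite phase \<Rightarrow> complex) set" where
  "FLset = {f. \<exists>\<phi>\<in>Lset. f = Fou \<phi>}"

definition FLt :: "real set \<Rightarrow> (real \<Rightarrow> 'n::finite phase \<Rightarrow> complex) \<Rightarrow> bool" where
  "FLt I g \<longleftrightarrow> (\<exists>\<phi>\<in>Ltset I. \<forall>\<epsilon>\<in>I. g \<epsilon> = Fou (\<phi> \<epsilon>))"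

text \<open>||G||_{F(L)} = int dy sup_x |(F^- G)(x,y)|; F^- G is the (essentially unique)
  element of L with F(F^- G) = G, so we take the value over the representatives.\<close>
definition FL_norm :: "('n::finite phase \<Rightarrow> complex) \<Rightarrow> real" where
  "FL_norm f = Inf {L_norm \<phi> | \<phi>. \<phi> \<in> Lset \<and> f = Fou \<phi>}"

end

theory Submission
  imports Defs
begin

text \<open>By hypothesis the resolvents are \<open>r \<epsilon> z = Fou (\<phi> \<epsilon>)\<close> for a single \<open>\<phi>\<close> in
  \<open>L\<^sup>~\<close>. Each difference \<open>\<phi> \<epsilon> - \<phi> \<epsilon>\<^sub>0\<close> lies in \<open>L\<close> and represents
  \<open>r \<epsilon> z - r \<epsilon>\<^sub>0 z\<close>, so the \<open>F(L)\<close>-norm of the latter is at most the \<open>L\<close>-norm of the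
  former. That norm tends to \<open>0\<close>: an approximant \<open>s\<close> of \<open>\<phi>\<close> in \<open>C\<^sub>c(X; C(I; BC\<^sub>u(X)))\<close>
  is \<open>L\<close>-close to \<open>\<phi>\<close> uniformly in \<open>\<epsilon>\<close>, and \<open>s \<epsilon> \<rightarrow> s \<epsilon>\<^sub>0\<close> uniformly on a compact
  support, which costs only a bounded factor in the \<open>L\<close>-norm.\<close>

lemma ennreal_tendsto_0I:
  fixes f :: "'a \<Rightarrow> ennreal"
  assumes "\<And>e. e > 0 \<Longrightarrow> eventually (\<lambda>x. f x < ennreal e) F"
  shows "(f \<longlongrightarrow> 0) F"
proof (rule order_tendstoI)
  fix a :: ennreal assume a: "0 < a"
  show "eventually (\<lambda>x. f x < a) F"
  proof (cases a rule: ennreal_cases)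
    case (real r)
    with a have "r > 0"
      by simp
    then show ?thesis
      using assms real by simp
  next
    case top
    then have one: "ennreal 1 < a"
      by simp
    from assms[OF zero_less_one] show ?thesis
      by (rule eventually_mono) (rule order.strict_trans[OF _ one])
  qed
qed simp

text \<open>Just enough regularity to make \<open>y \<mapsto> sup\<^sub>x |\<phi> x y|\<close> measurable, so that
  \<open>L_enorm\<close> is subadditive.\<close>
definition L_regular :: "(real^'n::finite \<Rightarrow> real^'n \<Rightarrow> complex) \<Rightarrow> bool" where
  "L_regular \<phi> \<longleftrightarrow> (\<forall>y. continuous_on UNIV (\<lambda>x. \<phi> x y)) \<and>
                   (\<forall>x. (\<lambda>y. \<phi> x y) \<in> borel_measurable lborel)"

lemma L_regular_diff:
  "L_regular f \<Longrightarrow> L_regular g \<Longrightarrow> L_regular (\<lambda>x y. f x y - g x y)"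
  unfolding L_regular_def by (auto intro: continuous_on_diff borel_measurable_diff)

lemma L_regular_add:
  "L_regular f \<Longrightarrow> L_regular g \<Longrightarrow> L_regular (\<lambda>x y. f x y + g x y)"
  unfolding L_regular_def by (auto intro: continuous_on_add borel_measurable_add)

lemma BCu_diff: "BCu f \<Longrightarrow> BCu g \<Longrightarrow> BCu (\<lambda>x. f x - g x)"
  unfolding BCu_def by (auto intro: bounded_minus_comp uniformly_continuous_on_diff)

text \<open>The supremum over \<open>x\<close> may be taken over a countable dense set, by continuity in \<open>x\<close>.\<close>
lemma L_regular_SUP_measurable:
  fixes g :: "real^'n::finite \<Rightarrow> real^'n \<Rightarrow> complex"
  assumes "L_regular g"
  shows "(\<lambda>y. SUP x. ennreal (cmod (g x y))) \<in> borel_measurable lborel"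
proof -
  obtain D :: "(real^'n) set"
    where D: "countable D" "\<And>U. open U \<Longrightarrow> U \<noteq> {} \<Longrightarrow> \<exists>d\<in>D. d \<in> U"
    by (rule countable_dense_setE) blast
  have SUP_dense: "(SUP x. ennreal (cmod (g x y))) = (SUP x\<in>D. ennreal (cmod (g x y)))" for y
  proof (rule antisym)
    let ?S = "SUP x\<in>D. ennreal (cmod (g x y))"
    have "open {x. ?S < ennreal (cmod (g x y))}"
      using assms unfolding L_regular_def
      by (intro open_Collect_less continuous_on_const continuous_on_ennreal continuous_on_norm) auto
    moreover have "\<not> (\<exists>d\<in>D. d \<in> {x. ?S < ennreal (cmod (g x y))})"
      by (auto simp: not_less intro: SUP_upper)
    ultimately have "{x. ?S < ennreal (cmod (g x y))} = {}"
      using D(2) by blast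
    then show "(SUP x. ennreal (cmod (g x y))) \<le> ?S"
      by (auto simp: not_less intro!: SUP_least)
  qed (rule SUP_subset_mono; simp)
  have [measurable]: "(\<lambda>y. g x y) \<in> borel_measurable borel" for x
    using assms unfolding L_regular_def by simp
  show ?thesis
    unfolding SUP_dense using D(1) by measurable
qed

lemma L_enorm_add_le:
  assumes "L_regular f" "L_regular g"
  shows "L_enorm (\<lambda>x y. f x y + g x y) \<le> L_enorm f + L_enorm g"
proof -
  have "(SUP x. ennreal (cmod (f x y + g x y)))
          \<le> (SUP x. ennreal (cmod (f x y))) + (SUP x. ennreal (cmod (g x y)))" for y
  proof (rule SUP_least)
    fix x
    have "ennreal (cmod (f x y + g x y)) \<le> ennreal (cmod (f x y)) + ennreal (cmod (g x y))"
      by (simp add: norm_triangle_ineq ennreal_plus[symmetric] del: ennreal_plus)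
    also have "\<dots> \<le> (SUP x. ennreal (cmod (f x y))) + (SUP x. ennreal (cmod (g x y)))"
      by (intro add_mono SUP_upper) auto
    finally show "ennreal (cmod (f x y + g x y)) \<le> \<dots>" .
  qed
  then have "L_enorm (\<lambda>x y. f x y + g x y)
               \<le> (\<integral>\<^sup>+ y. (SUP x. ennreal (cmod (f x y))) + (SUP x. ennreal (cmod (g x y))) \<partial>lborel)"
    unfolding L_enorm_def by (rule nn_integral_mono)
  also have "\<dots> = L_enorm f + L_enorm g"
    unfolding L_enorm_def by (intro nn_integral_add L_regular_SUP_measurable assms)
  finally show ?thesis .
qed

lemma L_enorm_minus_commute:
  "L_enorm (\<lambda>x y. f x y - g x y) = L_enorm (\<lambda>x y. g x y - f x y)"
  unfolding L_enorm_def by (simp add: norm_minus_commute)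

lemma L_enorm_diff_le3:
  assumes "L_regular f" "L_regular g" "L_regular f'" "L_regular g'"
  shows "L_enorm (\<lambda>x y. f x y - g x y)
           \<le> L_enorm (\<lambda>x y. f' x y - f x y) + L_enorm (\<lambda>x y. f' x y - g' x y)
             + L_enorm (\<lambda>x y. g' x y - g x y)"
proof -
  have "L_enorm (\<lambda>x y. f x y - g x y)
          = L_enorm (\<lambda>x y. ((f x y - f' x y) + (f' x y - g' x y)) + (g' x y - g x y))"
    by (simp add: algebra_simps)
  also have "\<dots> \<le> L_enorm (\<lambda>x y. (f x y - f' x y) + (f' x y - g' x y)) + L_enorm (\<lambda>x y. g' x y - g x y)"
    by (intro L_enorm_add_le L_regular_add L_regular_diff assms)
  also have "\<dots> \<le> L_enorm (\<lambda>x y. f x y - f' x y) + L_enorm (\<lambda>x y. f' x y - g' x y)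
                     + L_enorm (\<lambda>x y. g' x y - g x y)"
    by (intro add_right_mono L_enorm_add_le L_regular_diff assms)
  finally show ?thesis
    unfolding L_enorm_minus_commute[of f' f] .
qed

lemma L_enorm_le_Lt_enorm: "\<epsilon> \<in> I \<Longrightarrow> L_enorm (\<phi> \<epsilon>) \<le> Lt_enorm I \<phi>"
  unfolding L_enorm_def Lt_enorm_def by (intro nn_integral_mono SUP_upper)

lemma L_enorm_le_bounded_support:
  fixes g :: "real^'n::finite \<Rightarrow> real^'n \<Rightarrow> complex"
  assumes "\<And>x y. cmod (g x y) \<le> M" "\<And>x y. norm y > R \<Longrightarrow> g x y = 0"
  shows "L_enorm g \<le> ennreal M * emeasure lborel (cball (0::real^'n) R)"
proof -
  have "(SUP x. ennreal (cmod (g x y))) \<le> ennreal M * indicator (cball 0 R) y" for y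
  proof (cases "y \<in> cball 0 R")
    case True
    then show ?thesis
      using assms(1) by (auto intro!: SUP_least ennreal_leI)
  next
    case False
    then show ?thesis
      using assms(2) by auto
  qed
  then have "L_enorm g \<le> (\<integral>\<^sup>+ y. ennreal M * indicator (cball (0::real^'n) R) y \<partial>lborel)"
    unfolding L_enorm_def by (rule nn_integral_mono)
  also have "\<dots> = ennreal M * emeasure lborel (cball (0::real^'n) R)"
    by (rule nn_integral_cmult_indicator) simp
  finally show ?thesis .
qed

lemma Cc_LtD:
  fixes s :: "real \<Rightarrow> real^'n::finite \<Rightarrow> real^'n \<Rightarrow> complex"
  assumes "s \<in> Cc_Lt I"
  shows "\<And>\<epsilon> y. \<epsilon> \<in> I \<Longrightarrow> BCu (\<lambda>x. s \<epsilon> x y)"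
    and "\<And>\<epsilon>0 y e. \<epsilon>0 \<in> I \<Longrightarrow> e > 0 \<Longrightarrow>
           \<exists>d>0. \<forall>\<epsilon>\<in>I. \<bar>\<epsilon> - \<epsilon>0\<bar> < d \<longrightarrow> (\<forall>x. cmod (s \<epsilon> x y - s \<epsilon>0 x y) \<le> e)"
    and "\<And>y0 e. e > 0 \<Longrightarrow>
           \<exists>d>0. \<forall>y. dist y y0 < d \<longrightarrow> (\<forall>\<epsilon>\<in>I. \<forall>x. cmod (s \<epsilon> x y - s \<epsilon> x y0) \<le> e)"
    and "\<exists>R. \<forall>\<epsilon> x y. norm y > R \<longrightarrow> s \<epsilon> x y = 0"
  using assms unfolding Cc_Lt_def by blast+

lemma Cc_Lt_finite_net:
  fixes s :: "real \<Rightarrow> real^'n::finite \<Rightarrow> real^'n \<Rightarrow> complex"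
  assumes s: "s \<in> Cc_Lt I" and \<eta>: "\<eta> > 0"
  shows "\<exists>T R. finite T \<and> (\<forall>\<epsilon> x y. norm y > R \<longrightarrow> s \<epsilon> x y = 0) \<and>
           (\<forall>y\<in>cball 0 R. \<exists>t\<in>T. \<forall>\<epsilon>\<in>I. \<forall>x. cmod (s \<epsilon> x y - s \<epsilon> x t) \<le> \<eta>)"
proof -
  obtain R where R: "\<And>\<epsilon> x y. norm y > R \<Longrightarrow> s \<epsilon> x y = 0"
    using Cc_LtD(4)[OF s] by blast
  have "\<forall>t. \<exists>d>0. \<forall>y. dist y t < d \<longrightarrow> (\<forall>\<epsilon>\<in>I. \<forall>x. cmod (s \<epsilon> x y - s \<epsilon> x t) \<le> \<eta>)"
    using Cc_LtD(3)[OF s \<eta>] by blast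
  then obtain d where d: "\<And>t. d t > 0"
    "\<And>t y. dist y t < d t \<Longrightarrow> \<forall>\<epsilon>\<in>I. \<forall>x. cmod (s \<epsilon> x y - s \<epsilon> x t) \<le> \<eta>"
    by metis
  have "cball 0 R \<subseteq> (\<Union>t\<in>cball 0 R. ball t (d t))"
    using d(1) by auto
  then obtain T where T: "T \<subseteq> cball 0 R" "finite T" "cball 0 R \<subseteq> (\<Union>t\<in>T. ball t (d t))"
    using compactE_image[of "cball 0 R" "cball 0 R" "\<lambda>t. ball t (d t)"] by auto
  have "\<exists>t\<in>T. \<forall>\<epsilon>\<in>I. \<forall>x. cmod (s \<epsilon> x y - s \<epsilon> x t) \<le> \<eta>" if y: "y \<in> cball 0 R" for y
  proof -
    obtain t where t: "t \<in> T" "dist t y < d t"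
      using T(3) y by auto
    then have "dist y t < d t"
      by (simp add: dist_commute)
    with t(1) show ?thesis
      using d(2) by blast
  qed
  with T(2) R show ?thesis
    by (intro exI[of _ T] exI[of _ R]) simp
qed

lemma Cc_Lt_L_regular:
  fixes s :: "real \<Rightarrow> real^'n::finite \<Rightarrow> real^'n \<Rightarrow> complex"
  assumes s: "s \<in> Cc_Lt I" and \<epsilon>: "\<epsilon> \<in> I"
  shows "L_regular (s \<epsilon>)"
proof -
  have cont_y: "continuous_on UNIV (\<lambda>y. s \<epsilon> x y)" for x
    unfolding continuous_on_iff
  proof (intro ballI allI impI)
    fix y0 and e :: real assume "e > 0"
    then have "e/2 > 0"
      by simp
    then obtain d where d: "d > 0"
      "\<forall>y. dist y y0 < d \<longrightarrow> (\<forall>\<epsilon>\<in>I. \<forall>x. cmod (s \<epsilon> x y - s \<epsilon> x y0) \<le> e/2)"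
      using Cc_LtD(3)[OF s] by blast
    have "dist (s \<epsilon> x y) (s \<epsilon> x y0) < e" if "dist y y0 < d" for y
    proof -
      have "cmod (s \<epsilon> x y - s \<epsilon> x y0) \<le> e/2"
        using d(2) that \<epsilon> by blast
      then show ?thesis
        using \<open>e > 0\<close> by (simp add: dist_norm)
    qed
    then show "\<exists>d>0. \<forall>y\<in>UNIV. dist y y0 < d \<longrightarrow> dist (s \<epsilon> x y) (s \<epsilon> x y0) < e"
      using d(1) by blast
  qed
  have "continuous_on UNIV (\<lambda>x. s \<epsilon> x y)" for y
    using Cc_LtD(1)[OF s \<epsilon>] unfolding BCu_def by (blast intro: uniformly_continuous_imp_continuous)
  then show ?thesis
    unfolding L_regular_def using borel_measurable_continuous_onI[OF cont_y] by simp
qed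

lemma Cc_Lt_bounded:
  fixes s :: "real \<Rightarrow> real^'n::finite \<Rightarrow> real^'n \<Rightarrow> complex"
  assumes s: "s \<in> Cc_Lt I" and \<epsilon>: "\<epsilon> \<in> I"
  obtains M where "\<And>x y. cmod (s \<epsilon> x y) \<le> M"
proof -
  obtain T R where T: "finite T" and R: "\<forall>\<epsilon> x y. norm y > R \<longrightarrow> s \<epsilon> x y = 0"
    and net: "\<forall>y\<in>cball 0 R. \<exists>t\<in>T. \<forall>\<epsilon>\<in>I. \<forall>x. cmod (s \<epsilon> x y - s \<epsilon> x t) \<le> 1"
    using Cc_Lt_finite_net[OF s zero_less_one] by blast
  have "\<forall>t. \<exists>b. \<forall>x. cmod (s \<epsilon> x t) \<le> b"
    using Cc_LtD(1)[OF s \<epsilon>] unfolding BCu_def bounded_iff by blast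
  then obtain b where b: "\<And>x t. cmod (s \<epsilon> x t) \<le> b t"
    by metis
  have "cmod (s \<epsilon> x y) \<le> 1 + (\<Sum>t\<in>T. \<bar>b t\<bar>)" for x y
  proof (cases "y \<in> cball 0 R")
    case True
    then obtain t where t: "t \<in> T" "cmod (s \<epsilon> x y - s \<epsilon> x t) \<le> 1"
      using net \<epsilon> by blast
    have "cmod (s \<epsilon> x y) \<le> cmod (s \<epsilon> x y - s \<epsilon> x t) + cmod (s \<epsilon> x t)"
      using norm_triangle_ineq[of "s \<epsilon> x y - s \<epsilon> x t" "s \<epsilon> x t"] by simp
    moreover have "\<bar>b t\<bar> \<le> (\<Sum>t\<in>T. \<bar>b t\<bar>)"
      using t(1) T by (intro member_le_sum) auto
    ultimately show ?thesis
      using t(2) b[of x t] by linarith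
  next
    case False
    then show ?thesis
      using R by (simp add: sum_nonneg)
  qed
  then show thesis by (rule that)
qed

lemma Cc_Lt_L_enorm_finite:
  fixes s :: "real \<Rightarrow> real^'n::finite \<Rightarrow> real^'n \<Rightarrow> complex"
  assumes s: "s \<in> Cc_Lt I" and \<epsilon>: "\<epsilon> \<in> I"
  shows "L_enorm (s \<epsilon>) < \<infinity>"
proof -
  obtain M where M: "\<And>x y. cmod (s \<epsilon> x y) \<le> M"
    using Cc_Lt_bounded[OF s \<epsilon>] by blast
  obtain R where R: "\<And>\<epsilon> x y. norm y > R \<Longrightarrow> s \<epsilon> x y = 0"
    using Cc_LtD(4)[OF s] by blast
  have "L_enorm (s \<epsilon>) \<le> ennreal M * emeasure lborel (cball (0::real^'n) R)"
    using M R by (rule L_enorm_le_bounded_support)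
  also have "\<dots> < \<infinity>"
    using emeasure_lborel_cball_finite[of "0::real^'n" R] by (auto simp: ennreal_mult_less_top)
  finally show ?thesis .
qed

text \<open>Equicontinuity in \<open>y\<close> reduces uniform convergence to convergence on a finite net.\<close>
lemma Cc_Lt_uniform_tendsto:
  fixes s :: "real \<Rightarrow> real^'n::finite \<Rightarrow> real^'n \<Rightarrow> complex"
  assumes s: "s \<in> Cc_Lt I" and \<epsilon>0: "\<epsilon>0 \<in> I" and \<eta>: "\<eta> > 0"
  shows "eventually (\<lambda>\<epsilon>. \<forall>x y. cmod (s \<epsilon> x y - s \<epsilon>0 x y) \<le> \<eta>) (at \<epsilon>0 within I)"
proof -
  have "\<eta>/3 > 0"
    using \<eta> by simp
  obtain T R where T: "finite T" and R: "\<forall>\<epsilon> x y. norm y > R \<longrightarrow> s \<epsilon> x y = 0"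
    and net: "\<forall>y\<in>cball 0 R. \<exists>t\<in>T. \<forall>\<epsilon>\<in>I. \<forall>x. cmod (s \<epsilon> x y - s \<epsilon> x t) \<le> \<eta>/3"
    using Cc_Lt_finite_net[OF s \<open>\<eta>/3 > 0\<close>] by blast
  have "eventually (\<lambda>\<epsilon>. \<forall>x. cmod (s \<epsilon> x t - s \<epsilon>0 x t) \<le> \<eta>/3) (at \<epsilon>0 within I)" for t
  proof -
    obtain d where "d > 0" "\<forall>\<epsilon>\<in>I. \<bar>\<epsilon> - \<epsilon>0\<bar> < d \<longrightarrow> (\<forall>x. cmod (s \<epsilon> x t - s \<epsilon>0 x t) \<le> \<eta>/3)"
      using Cc_LtD(2)[OF s \<epsilon>0 \<open>\<eta>/3 > 0\<close>] by blast
    then show ?thesis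
      unfolding eventually_at by (auto simp: dist_real_def)
  qed
  then have "eventually (\<lambda>\<epsilon>. \<forall>t\<in>T. \<forall>x. cmod (s \<epsilon> x t - s \<epsilon>0 x t) \<le> \<eta>/3) (at \<epsilon>0 within I)"
    using T by (simp add: eventually_ball_finite)
  moreover have "eventually (\<lambda>\<epsilon>. \<epsilon> \<in> I) (at \<epsilon>0 within I)"
    by (simp add: eventually_at_filter)
  ultimately show ?thesis
  proof eventually_elim
    case (elim \<epsilon>)
    have "cmod (s \<epsilon> x y - s \<epsilon>0 x y) \<le> \<eta>" for x y
    proof (cases "y \<in> cball 0 R")
      case True
      then obtain t where t: "t \<in> T" "\<forall>\<epsilon>\<in>I. \<forall>x. cmod (s \<epsilon> x y - s \<epsilon> x t) \<le> \<eta>/3"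
        using net by blast
      have a: "cmod (s \<epsilon> x y - s \<epsilon> x t) \<le> \<eta>/3"
        using t(2) elim(2) by blast
      have b: "cmod (s \<epsilon> x t - s \<epsilon>0 x t) \<le> \<eta>/3"
        using elim(1) t(1) by blast
      have "cmod (s \<epsilon>0 x y - s \<epsilon>0 x t) \<le> \<eta>/3"
        using t(2) \<epsilon>0 by blast
      then have c: "cmod (s \<epsilon>0 x t - s \<epsilon>0 x y) \<le> \<eta>/3"
        by (metis norm_minus_commute)
      have "cmod (s \<epsilon> x y - s \<epsilon>0 x y) \<le> \<eta>/3 + (\<eta>/3 + \<eta>/3)"
        by (rule norm_diff_triangle_le[OF a norm_diff_triangle_le[OF b c]])
      then show ?thesis
        by simp
    next
      case False
      then have "s \<epsilon> x y = 0" "s \<epsilon>0 x y = 0"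
        using R by auto
      then show ?thesis
        using \<eta> by simp
    qed
    then show ?case
      by blast
  qed
qed

lemma Cc_Lt_L_enorm_tendsto:
  fixes s :: "real \<Rightarrow> real^'n::finite \<Rightarrow> real^'n \<Rightarrow> complex"
  assumes s: "s \<in> Cc_Lt I" and \<epsilon>0: "\<epsilon>0 \<in> I"
  shows "((\<lambda>\<epsilon>. L_enorm (\<lambda>x y. s \<epsilon> x y - s \<epsilon>0 x y)) \<longlongrightarrow> 0) (at \<epsilon>0 within I)"
proof (rule ennreal_tendsto_0I)
  fix e :: real assume e: "e > 0"
  obtain R where R: "\<And>\<epsilon> x y. norm y > R \<Longrightarrow> s \<epsilon> x y = 0"
    using Cc_LtD(4)[OF s] by blast
  define V where "V = measure lborel (cball (0::real^'n) R)"
  have V: "emeasure lborel (cball (0::real^'n) R) = ennreal V" "V \<ge> 0"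
    unfolding V_def using emeasure_lborel_cball_finite[of "0::real^'n" R]
    by (auto intro: emeasure_eq_ennreal_measure)
  define \<eta> where "\<eta> = e / (V + 1)"
  have \<eta>: "\<eta> > 0" "\<eta> * V < e"
    unfolding \<eta>_def using e V(2) by (auto simp: field_simps)
  show "eventually (\<lambda>\<epsilon>. L_enorm (\<lambda>x y. s \<epsilon> x y - s \<epsilon>0 x y) < ennreal e) (at \<epsilon>0 within I)"
    using Cc_Lt_uniform_tendsto[OF s \<epsilon>0 \<eta>(1)]
  proof eventually_elim
    case (elim \<epsilon>)
    have "L_enorm (\<lambda>x y. s \<epsilon> x y - s \<epsilon>0 x y) \<le> ennreal \<eta> * ennreal V"
      unfolding V(1)[symmetric] by (rule L_enorm_le_bounded_support) (use elim R in auto)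
    also have "\<dots> < ennreal e"
      using \<eta> V(2) e by (simp add: ennreal_mult[symmetric] ennreal_lessI)
    finally show ?case .
  qed
qed

lemma Cc_Lt_slice_diff_in_Cc_L:
  fixes s :: "real \<Rightarrow> real^'n::finite \<Rightarrow> real^'n \<Rightarrow> complex"
  assumes s: "s \<in> Cc_Lt I" and \<epsilon>: "\<epsilon> \<in> I" and \<epsilon>': "\<epsilon>' \<in> I"
  shows "(\<lambda>x y. s \<epsilon> x y - s \<epsilon>' x y) \<in> Cc_L"
proof -
  have "\<exists>d>0. \<forall>y. dist y y0 < d \<longrightarrow>
          (\<forall>x. cmod ((s \<epsilon> x y - s \<epsilon>' x y) - (s \<epsilon> x y0 - s \<epsilon>' x y0)) \<le> e)"
    if "e > 0" for y0 e
  proof -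
    have "e/2 > 0"
      using \<open>e > 0\<close> by simp
    then obtain d where d: "d > 0"
      "\<forall>y. dist y y0 < d \<longrightarrow> (\<forall>\<epsilon>\<in>I. \<forall>x. cmod (s \<epsilon> x y - s \<epsilon> x y0) \<le> e/2)"
      using Cc_LtD(3)[OF s] by blast
    have "cmod ((s \<epsilon> x y - s \<epsilon>' x y) - (s \<epsilon> x y0 - s \<epsilon>' x y0)) \<le> e"
      if "dist y y0 < d" for x y
    proof -
      have eq: "(s \<epsilon> x y - s \<epsilon>' x y) - (s \<epsilon> x y0 - s \<epsilon>' x y0)
                  = (s \<epsilon> x y - s \<epsilon> x y0) - (s \<epsilon>' x y - s \<epsilon>' x y0)"
        by simp
      have "cmod (s \<epsilon> x y - s \<epsilon> x y0) \<le> e/2" "cmod (s \<epsilon>' x y - s \<epsilon>' x y0) \<le> e/2"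
        using d(2) that \<epsilon> \<epsilon>' by blast+
      then show ?thesis
        unfolding eq using norm_triangle_ineq4[of "s \<epsilon> x y - s \<epsilon> x y0" "s \<epsilon>' x y - s \<epsilon>' x y0"]
        by linarith
    qed
    then show ?thesis
      using d(1) by blast
  qed
  moreover have "BCu (\<lambda>x. s \<epsilon> x y - s \<epsilon>' x y)" for y
    using \<epsilon> \<epsilon>' by (intro BCu_diff Cc_LtD(1)[OF s])
  moreover have "\<exists>R. \<forall>x y. norm y > R \<longrightarrow> s \<epsilon> x y - s \<epsilon>' x y = 0"
  proof -
    obtain R where "\<And>\<epsilon> x y. norm y > R \<Longrightarrow> s \<epsilon> x y = 0"
      using Cc_LtD(4)[OF s] by blast
    then have "\<forall>x y. norm y > R \<longrightarrow> s \<epsilon> x y - s \<epsilon>' x y = 0"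
      by simp
    then show ?thesis by blast
  qed
  ultimately show ?thesis
    unfolding Cc_L_def by blast
qed

lemma LtsetD:
  assumes "\<phi> \<in> Ltset I"
  shows "\<And>\<epsilon> y. \<epsilon> \<in> I \<Longrightarrow> BCu (\<lambda>x. \<phi> \<epsilon> x y)"
    and "\<And>\<epsilon> x. \<epsilon> \<in> I \<Longrightarrow> (\<lambda>y. \<phi> \<epsilon> x y) \<in> borel_measurable lborel"
  using assms unfolding Ltset_def by blast+

lemma Ltset_L_regular:
  assumes "\<phi> \<in> Ltset I" "\<epsilon> \<in> I"
  shows "L_regular (\<phi> \<epsilon>)"
  using LtsetD[OF assms(1)] assms(2) unfolding L_regular_def BCu_def
  by (blast intro: uniformly_continuous_imp_continuous)

lemma Ltset_approx:
  assumes "\<phi> \<in> Ltset I"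
  obtains s where "\<And>k. s k \<in> Cc_Lt I"
    "(\<lambda>k. Lt_enorm I (\<lambda>\<epsilon> x y. s k \<epsilon> x y - \<phi> \<epsilon> x y)) \<longlonglongrightarrow> 0"
  using assms unfolding Ltset_def by blast

lemma Ltset_L_enorm_finite:
  assumes \<phi>: "\<phi> \<in> Ltset I" and \<epsilon>: "\<epsilon> \<in> I"
  shows "L_enorm (\<phi> \<epsilon>) < \<infinity>"
proof -
  obtain s where s: "\<And>k. s k \<in> Cc_Lt I"
    and lim: "(\<lambda>k. Lt_enorm I (\<lambda>\<epsilon> x y. s k \<epsilon> x y - \<phi> \<epsilon> x y)) \<longlonglongrightarrow> 0"
    using Ltset_approx[OF \<phi>] by blast
  obtain k where k: "Lt_enorm I (\<lambda>\<epsilon> x y. s k \<epsilon> x y - \<phi> \<epsilon> x y) < 1"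
    using order_tendstoD(2)[OF lim, of 1] by (auto simp: eventually_sequentially)
  then have "Lt_enorm I (\<lambda>\<epsilon> x y. s k \<epsilon> x y - \<phi> \<epsilon> x y) \<noteq> \<infinity>"
    by auto
  then have Lt_finite: "Lt_enorm I (\<lambda>\<epsilon> x y. s k \<epsilon> x y - \<phi> \<epsilon> x y) < \<infinity>"
    by (simp add: less_top)
  have "L_enorm (\<phi> \<epsilon>) = L_enorm (\<lambda>x y. (\<phi> \<epsilon> x y - s k \<epsilon> x y) + s k \<epsilon> x y)"
    by simp
  also have "\<dots> \<le> L_enorm (\<lambda>x y. \<phi> \<epsilon> x y - s k \<epsilon> x y) + L_enorm (s k \<epsilon>)"
    using \<epsilon> by (intro L_enorm_add_le L_regular_diff Ltset_L_regular[OF \<phi>] Cc_Lt_L_regular[OF s])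
  also have "\<dots> \<le> Lt_enorm I (\<lambda>\<epsilon> x y. s k \<epsilon> x y - \<phi> \<epsilon> x y) + L_enorm (s k \<epsilon>)"
    unfolding L_enorm_minus_commute[of "\<phi> \<epsilon>"]
    by (intro add_right_mono L_enorm_le_Lt_enorm[OF \<epsilon>, of "\<lambda>\<epsilon> x y. s k \<epsilon> x y - \<phi> \<epsilon> x y"])
  also have "\<dots> < \<infinity>"
    using Lt_finite Cc_Lt_L_enorm_finite[OF s \<epsilon>] by simp
  finally show ?thesis .
qed

lemma Ltset_slice_diff_in_Lset:
  assumes \<phi>: "\<phi> \<in> Ltset I" and \<epsilon>: "\<epsilon> \<in> I" and \<epsilon>': "\<epsilon>' \<in> I"
  shows "(\<lambda>x y. \<phi> \<epsilon> x y - \<phi> \<epsilon>' x y) \<in> Lset"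
proof -
  obtain s where s: "\<And>k. s k \<in> Cc_Lt I"
    and lim: "(\<lambda>k. Lt_enorm I (\<lambda>\<epsilon> x y. s k \<epsilon> x y - \<phi> \<epsilon> x y)) \<longlonglongrightarrow> 0"
    using Ltset_approx[OF \<phi>] by blast
  let ?Lt = "\<lambda>k. Lt_enorm I (\<lambda>\<epsilon> x y. s k \<epsilon> x y - \<phi> \<epsilon> x y)"
  have bound: "L_enorm (\<lambda>x y. (s k \<epsilon> x y - s k \<epsilon>' x y) - (\<phi> \<epsilon> x y - \<phi> \<epsilon>' x y)) \<le> ?Lt k + ?Lt k"
    for k
  proof -
    have "L_enorm (\<lambda>x y. (s k \<epsilon> x y - s k \<epsilon>' x y) - (\<phi> \<epsilon> x y - \<phi> \<epsilon>' x y))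
        = L_enorm (\<lambda>x y. (s k \<epsilon> x y - \<phi> \<epsilon> x y) + (\<phi> \<epsilon>' x y - s k \<epsilon>' x y))"
      by (simp add: algebra_simps)
    also have "\<dots> \<le> L_enorm (\<lambda>x y. s k \<epsilon> x y - \<phi> \<epsilon> x y) + L_enorm (\<lambda>x y. \<phi> \<epsilon>' x y - s k \<epsilon>' x y)"
      using \<epsilon> \<epsilon>' by (intro L_enorm_add_le L_regular_diff Ltset_L_regular[OF \<phi>] Cc_Lt_L_regular[OF s])
    also have "\<dots> \<le> ?Lt k + ?Lt k"
      unfolding L_enorm_minus_commute[of "\<phi> \<epsilon>'"]
      by (intro add_mono L_enorm_le_Lt_enorm[OF \<epsilon>, of "\<lambda>\<epsilon> x y. s k \<epsilon> x y - \<phi> \<epsilon> x y"]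
                         L_enorm_le_Lt_enorm[OF \<epsilon>', of "\<lambda>\<epsilon> x y. s k \<epsilon> x y - \<phi> \<epsilon> x y"])
    finally show ?thesis .
  qed
  have Lt2: "(\<lambda>k. ?Lt k + ?Lt k) \<longlonglongrightarrow> 0"
    using tendsto_add[OF lim lim] by simp
  have approx: "(\<lambda>k. L_enorm (\<lambda>x y. (s k \<epsilon> x y - s k \<epsilon>' x y) - (\<phi> \<epsilon> x y - \<phi> \<epsilon>' x y)))
                  \<longlonglongrightarrow> 0"
  proof (rule tendsto_sandwich[OF _ _ tendsto_const Lt2])
    show "eventually (\<lambda>k. 0 \<le> L_enorm (\<lambda>x y. (s k \<epsilon> x y - s k \<epsilon>' x y) - (\<phi> \<epsilon> x y - \<phi> \<epsilon>' x y)))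
            sequentially"
      by simp
    show "eventually (\<lambda>k. L_enorm (\<lambda>x y. (s k \<epsilon> x y - s k \<epsilon>' x y) - (\<phi> \<epsilon> x y - \<phi> \<epsilon>' x y))
                          \<le> ?Lt k + ?Lt k) sequentially"
      using bound by simp
  qed
  moreover have "(\<lambda>x y. s k \<epsilon> x y - s k \<epsilon>' x y) \<in> Cc_L" for k
    using s \<epsilon> \<epsilon>' by (rule Cc_Lt_slice_diff_in_Cc_L)
  moreover have "BCu (\<lambda>x. \<phi> \<epsilon> x y - \<phi> \<epsilon>' x y)" for y
    using \<epsilon> \<epsilon>' by (intro BCu_diff LtsetD(1)[OF \<phi>])
  moreover have "(\<lambda>y. \<phi> \<epsilon> x y - \<phi> \<epsilon>' x y) \<in> borel_measurable lborel" for x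
    using \<epsilon> \<epsilon>' by (intro borel_measurable_diff LtsetD(2)[OF \<phi>])
  ultimately show ?thesis
    unfolding Lset_def
    by (intro CollectI conjI allI exI[of _ "\<lambda>k x y. s k \<epsilon> x y - s k \<epsilon>' x y"]) auto
qed

lemma Ltset_L_enorm_tendsto:
  assumes \<phi>: "\<phi> \<in> Ltset I" and \<epsilon>0: "\<epsilon>0 \<in> I"
  shows "((\<lambda>\<epsilon>. L_enorm (\<lambda>x y. \<phi> \<epsilon> x y - \<phi> \<epsilon>0 x y)) \<longlongrightarrow> 0) (at \<epsilon>0 within I)"
proof (rule ennreal_tendsto_0I)
  fix e :: real assume e: "e > 0"
  obtain s where s: "\<And>k. s k \<in> Cc_Lt I"
    and lim: "(\<lambda>k. Lt_enorm I (\<lambda>\<epsilon> x y. s k \<epsilon> x y - \<phi> \<epsilon> x y)) \<longlonglongrightarrow> 0"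
    using Ltset_approx[OF \<phi>] by blast
  obtain k where k: "Lt_enorm I (\<lambda>\<epsilon> x y. s k \<epsilon> x y - \<phi> \<epsilon> x y) < ennreal (e/4)"
    using order_tendstoD(2)[OF lim, of "ennreal (e/4)"] e by (auto simp: eventually_sequentially)
  have approx: "L_enorm (\<lambda>x y. s k \<epsilon> x y - \<phi> \<epsilon> x y) \<le> ennreal (e/4)" if "\<epsilon> \<in> I" for \<epsilon>
    using L_enorm_le_Lt_enorm[OF that, of "\<lambda>\<epsilon> x y. s k \<epsilon> x y - \<phi> \<epsilon> x y"] k by simp
  have "eventually (\<lambda>\<epsilon>. L_enorm (\<lambda>x y. s k \<epsilon> x y - s k \<epsilon>0 x y) < ennreal (e/4)) (at \<epsilon>0 within I)"
    using order_tendstoD(2)[OF Cc_Lt_L_enorm_tendsto[OF s \<epsilon>0], of "ennreal (e/4)"] e by simp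
  moreover have "eventually (\<lambda>\<epsilon>. \<epsilon> \<in> I) (at \<epsilon>0 within I)"
    by (simp add: eventually_at_filter)
  ultimately show "eventually (\<lambda>\<epsilon>. L_enorm (\<lambda>x y. \<phi> \<epsilon> x y - \<phi> \<epsilon>0 x y) < ennreal e) (at \<epsilon>0 within I)"
  proof eventually_elim
    case (elim \<epsilon>)
    have "L_enorm (\<lambda>x y. \<phi> \<epsilon> x y - \<phi> \<epsilon>0 x y)
            \<le> L_enorm (\<lambda>x y. s k \<epsilon> x y - \<phi> \<epsilon> x y) + L_enorm (\<lambda>x y. s k \<epsilon> x y - s k \<epsilon>0 x y)
              + L_enorm (\<lambda>x y. s k \<epsilon>0 x y - \<phi> \<epsilon>0 x y)"
      using elim(2) \<epsilon>0 by (intro L_enorm_diff_le3 Ltset_L_regular[OF \<phi>] Cc_Lt_L_regular[OF s])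
    also have "\<dots> \<le> ennreal (e/4) + ennreal (e/4) + ennreal (e/4)"
      using approx[OF elim(2)] approx[OF \<epsilon>0] elim(1) by (intro add_mono) auto
    also have "\<dots> = ennreal (3 * e / 4)"
      using e by (simp add: ennreal_plus[symmetric] del: ennreal_plus)
    also have "\<dots> < ennreal e"
      using e by (intro ennreal_lessI) auto
    finally show ?case .
  qed
qed

lemma integrable_Fou_integrand:
  fixes \<phi> :: "real^'n::finite \<Rightarrow> real^'n \<Rightarrow> complex"
  assumes meas: "(\<lambda>y. \<phi> x y) \<in> borel_measurable lborel" and fin: "L_enorm \<phi> < \<infinity>"
  shows "integrable lborel (\<lambda>y. exp (- \<i> * complex_of_real (v \<bullet> y)) * \<phi> x y)"
proof (rule integrableI_bounded)
  have "(\<lambda>y. exp (- \<i> * complex_of_real (v \<bullet> y))) \<in> borel_measurable borel"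
    by (intro borel_measurable_continuous_onI continuous_intros)
  then show "(\<lambda>y. exp (- \<i> * complex_of_real (v \<bullet> y)) * \<phi> x y) \<in> borel_measurable lborel"
    using meas by (simp add: borel_measurable_times)
  have unit: "norm (exp (- \<i> * complex_of_real (v \<bullet> y))) = 1" for y
    using norm_exp_i_times[of "- (v \<bullet> y)"] by simp
  have "(\<integral>\<^sup>+ y. ennreal (norm (exp (- \<i> * complex_of_real (v \<bullet> y)) * \<phi> x y)) \<partial>lborel) \<le> L_enorm \<phi>"
    unfolding L_enorm_def by (intro nn_integral_mono) (auto simp: norm_mult unit intro: SUP_upper)
  then show "(\<integral>\<^sup>+ y. ennreal (norm (exp (- \<i> * complex_of_real (v \<bullet> y)) * \<phi> x y)) \<partial>lborel) < \<infinity>"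
    using fin by (rule le_less_trans)
qed

lemma Fou_diff:
  fixes \<phi> \<theta> :: "real^'n::finite \<Rightarrow> real^'n \<Rightarrow> complex"
  assumes "\<And>x. (\<lambda>y. \<phi> x y) \<in> borel_measurable lborel" "L_enorm \<phi> < \<infinity>"
    and "\<And>x. (\<lambda>y. \<theta> x y) \<in> borel_measurable lborel" "L_enorm \<theta> < \<infinity>"
  shows "Fou (\<lambda>x y. \<phi> x y - \<theta> x y) = (\<lambda>X. Fou \<phi> X - Fou \<theta> X)"
proof
  fix X :: "'n phase"
  show "Fou (\<lambda>x y. \<phi> x y - \<theta> x y) X = Fou \<phi> X - Fou \<theta> X"
    unfolding Fou_def
    using Bochner_Integration.integral_diff[OF integrable_Fou_integrand[OF assms(1,2)]
                                               integrable_Fou_integrand[OF assms(3,4)]]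
    by (simp add: right_diff_distrib)
qed

lemma FL_norm_Fou_le:
  assumes "\<psi> \<in> Lset"
  shows "0 \<le> FL_norm (Fou \<psi>)" and "FL_norm (Fou \<psi>) \<le> L_norm \<psi>"
proof -
  let ?S = "{L_norm \<theta> | \<theta>. \<theta> \<in> Lset \<and> Fou \<psi> = Fou \<theta>}"
  have mem: "L_norm \<psi> \<in> ?S"
    using assms by blast
  have nonneg: "\<And>v. v \<in> ?S \<Longrightarrow> 0 \<le> v"
    unfolding L_norm_def by auto
  then have "bdd_below ?S"
    by (rule bdd_belowI)
  then show "FL_norm (Fou \<psi>) \<le> L_norm \<psi>"
    unfolding FL_norm_def using mem by (rule cInf_lower[rotated])
  show "0 \<le> FL_norm (Fou \<psi>)"
    unfolding FL_norm_def using mem nonneg by (intro cInf_greatest) auto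
qed

lemma Ltset_FL_norm_tendsto:
  assumes \<phi>: "\<phi> \<in> Ltset I" and \<epsilon>0: "\<epsilon>0 \<in> I"
  shows "((\<lambda>\<epsilon>. FL_norm (Fou (\<lambda>x y. \<phi> \<epsilon> x y - \<phi> \<epsilon>0 x y))) \<longlongrightarrow> 0) (at \<epsilon>0 within I)"
proof (rule tendsto_sandwich[OF _ _ tendsto_const])
  show "eventually (\<lambda>\<epsilon>. 0 \<le> FL_norm (Fou (\<lambda>x y. \<phi> \<epsilon> x y - \<phi> \<epsilon>0 x y))) (at \<epsilon>0 within I)"
    unfolding eventually_at_filter
    by (intro always_eventually allI impI) (simp add: FL_norm_Fou_le Ltset_slice_diff_in_Lset[OF \<phi> _ \<epsilon>0])
  show "eventually (\<lambda>\<epsilon>. FL_norm (Fou (\<lambda>x y. \<phi> \<epsilon> x y - \<phi> \<epsilon>0 x y))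
                         \<le> L_norm (\<lambda>x y. \<phi> \<epsilon> x y - \<phi> \<epsilon>0 x y)) (at \<epsilon>0 within I)"
    unfolding eventually_at_filter
    by (intro always_eventually allI impI) (simp add: FL_norm_Fou_le Ltset_slice_diff_in_Lset[OF \<phi> _ \<epsilon>0])
  show "((\<lambda>\<epsilon>. L_norm (\<lambda>x y. \<phi> \<epsilon> x y - \<phi> \<epsilon>0 x y)) \<longlongrightarrow> 0) (at \<epsilon>0 within I)"
    unfolding L_norm_def using Ltset_L_enorm_tendsto[OF \<phi> \<epsilon>0] by (intro tendsto_enn2real) simp_all
qed

theorem corollary2:
  fixes \<alpha> \<beta> m C a :: real
    and h :: "real \<Rightarrow> 'n::finite phase \<Rightarrow> real"
    and B :: "real \<Rightarrow> 'n \<Rightarrow> 'n \<Rightarrow> real^'n \<Rightarrow> real"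
    and r :: "real \<Rightarrow> complex \<Rightarrow> 'n phase \<Rightarrow> complex"
  assumes I: "\<alpha> \<le> \<beta>"
    and m: "m > 0"
    and h_symb: "\<forall>\<epsilon>\<in>{\<alpha>..\<beta>}. S1 m (\<lambda>X. complex_of_real (h \<epsilon> X))
                                 \<and> elliptic m (\<lambda>X. complex_of_real (h \<epsilon> X))"
    and h_cont: "S1_cont m {\<alpha>..\<beta>} (\<lambda>\<epsilon> X. complex_of_real (h \<epsilon> X))"
    and h_below: "\<forall>\<epsilon>\<in>{\<alpha>..\<beta>}. \<forall>X. h \<epsilon> X \<ge> - C"
    and B_mag: "\<forall>\<epsilon>\<in>{\<alpha>..\<beta>}. magnetic_field (B \<epsilon>)"
    and B_cont: "BC_cont {\<alpha>..\<beta>} B"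
    and a: "a > 0"
    and res: "\<forall>z. z \<notin> complex_of_real ` {a..} \<longrightarrow>
               (\<forall>\<epsilon>\<in>{\<alpha>..\<beta>}. sharp_inverse (B \<epsilon>) (\<lambda>X. complex_of_real (h \<epsilon> X) - z) (r \<epsilon> z)
                               \<and> r \<epsilon> z \<in> FLset)
               \<and> FLt {\<alpha>..\<beta>} (\<lambda>\<epsilon>. r \<epsilon> z)"
  shows "\<forall>z. z \<notin> complex_of_real ` {a..} \<longrightarrow>
           (\<forall>\<epsilon>0\<in>{\<alpha>..\<beta>}. ((\<lambda>\<epsilon>. FL_norm (\<lambda>X. r \<epsilon> z X - r \<epsilon>0 z X)) \<longlongrightarrow> 0) (at \<epsilon>0 within {\<alpha>..\<beta>}))"
proof (intro allI impI ballI)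
  fix z \<epsilon>0
  assume z: "z \<notin> complex_of_real ` {a..}" and \<epsilon>0: "\<epsilon>0 \<in> {\<alpha>..\<beta>}"
  obtain \<phi> where \<phi>: "\<phi> \<in> Ltset {\<alpha>..\<beta>}" and r: "\<And>\<epsilon>. \<epsilon> \<in> {\<alpha>..\<beta>} \<Longrightarrow> r \<epsilon> z = Fou (\<phi> \<epsilon>)"
    using res z unfolding FLt_def by blast
  have "(\<lambda>X. r \<epsilon> z X - r \<epsilon>0 z X) = Fou (\<lambda>x y. \<phi> \<epsilon> x y - \<phi> \<epsilon>0 x y)" if \<epsilon>: "\<epsilon> \<in> {\<alpha>..\<beta>}" for \<epsilon>
  proof -
    have "Fou (\<lambda>x y. \<phi> \<epsilon> x y - \<phi> \<epsilon>0 x y) = (\<lambda>X. Fou (\<phi> \<epsilon>) X - Fou (\<phi> \<epsilon>0) X)"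
      by (intro Fou_diff LtsetD(2)[OF \<phi>] Ltset_L_enorm_finite[OF \<phi>] \<epsilon> \<epsilon>0)
    then show ?thesis
      using \<epsilon> \<epsilon>0 by (simp add: r)
  qed
  then have "eventually (\<lambda>\<epsilon>. FL_norm (Fou (\<lambda>x y. \<phi> \<epsilon> x y - \<phi> \<epsilon>0 x y))
                             = FL_norm (\<lambda>X. r \<epsilon> z X - r \<epsilon>0 z X)) (at \<epsilon>0 within {\<alpha>..\<beta>})"
    unfolding eventually_at_filter by (intro always_eventually) simp
  with Ltset_FL_norm_tendsto[OF \<phi> \<epsilon>0]
  show "((\<lambda>\<epsilon>. FL_norm (\<lambda>X. r \<epsilon> z X - r \<epsilon>0 z X)) \<longlongrightarrow> 0) (at \<epsilon>0 within {\<alpha>..\<beta>})"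
    by (rule Lim_transform_eventually)
qed

end
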